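(* Let $\mathcal{I}$ and $\mathcal{J}$ be ideals. If $\mathcal{J}$ is a weak P-ideal and $\mathcal{J}\preceq\mathcal{I}$, then $\mathrm{FinBW}(\mathcal{I})\subseteq\mathrm{FinBW}(\mathcal{J})$.
   Context: An ideal on an infinite countable set $X$ is a family $\mathcal{I}\subseteq\mathcal{P}(X)$ closed under subsets and finite unions, containing all finite subsets, with $X\notin\mathcal{I}$. A space $X$ is in $\mathrm{FinBW}(\mathcal{I})$ if $X$ is Hausdorff and for every sequence $(x_n)_{n\in\bigcup\mathcal{I}}$ in $X$ there is $A\notin\mathcal{I}$ with $(x_n)_{n\in A}$ convergent in $X$. An ideal $\mathcal{I}$ on $X$ is a weak P-ideal if for every partition $(A_n)_{n\in\omega}$ of $X$ into sets from $\mathcal{I}$ there is $S\notin\mathcal{I}$ with $S\cap A_n$ finite for all $n$. $\mathrm{Fin}^2$: ideal on $\omega^2$ of all $A$ with only finitely many $n$ such that $\{m:(n,m)\in A\}$ is infinite. $\mathrm{Fin}\otimes\emptyset$: the family of $A\subseteq\omega^2$ with $A\subseteq F\times\omega$ for some finite $F$. If $(G_{i,j})_{(i,j)\in\omega^2}$ is a partition of $\bigcup\mathcal{I}$ (pieces may be empty) into sets from $\mathcal{I}$, then $\hat{\mathcal{I}}(G_{i,j})$ is the ideal on $\omega^2$ of all $A\subseteq\omega^2$ such that every $X\subseteq\bigcup_{(i,j)\in A}G_{i,j}$ with $X\cap G_{i,j}$ finite for all $(i,j)\in A$ belongs to $\mathcal{I}$. $\mathcal{J}\preceq\mathcal{I}$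 means: for every partition $(H_{i,j})\subseteq\mathcal{J}$ of $\bigcup\mathcal{J}$ with $\mathrm{Fin}\otimes\emptyset\subseteq\hat{\mathcal{J}}(H_{i,j})$ there is a partition $(G_{i,j})\subseteq\mathcal{I}$ of $\bigcup\mathcal{I}$ with $\hat{\mathcal{J}}(H_{i,j})\cap\mathrm{Fin}^2\subseteq\hat{\mathcal{I}}(G_{i,j})$. *)

theory Defs
  imports "HOL-Analysis.Analysis"
begin

definition ideal_on :: "'a set \<Rightarrow> 'a set set \<Rightarrow> bool" where
  "ideal_on X I \<longleftrightarrow> infinite X \<and> countable X \<and> I \<subseteq> Pow X \<and>
     (\<forall>A B. A \<in> I \<and> B \<subseteq> A \<longrightarrow> B \<in> I) \<and>
     (\<forall>A B. A \<in> I \<and> B \<in> I \<longrightarrow> A \<union> B \<in> I) \<and>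
     (\<forall>F. F \<subseteq> X \<and> finite F \<longrightarrow> F \<in> I) \<and> X \<notin> I"

definition ideal :: "'a set set \<Rightarrow> bool" where
  "ideal I \<longleftrightarrow> ideal_on (\<Union>I) I"

text \<open>A family of pieces indexed by \<open>'i\<close> is a partition of X into sets from I
  (pieces may be empty).\<close>
definition partition_in :: "'a set set \<Rightarrow> 'a set \<Rightarrow> ('i \<Rightarrow> 'a set) \<Rightarrow> bool" where
  "partition_in I X P \<longleftrightarrow> (\<forall>i j. i \<noteq> j \<longrightarrow> P i \<inter> P j = {}) \<and>
     (\<Union>i. P i) = X \<and> (\<forall>i. P i \<in> I)"

definition weak_P_ideal :: "'a set set \<Rightarrow> bool" where
  "weak_P_ideal I \<longleftrightarrow> (\<forall>A :: nat \<Rightarrow> 'a set. partition_in I (\<Union>I) A \<longrightarrow>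
     (\<exists>S. S \<subseteq> \<Union>I \<and> S \<notin> I \<and> (\<forall>n. finite (S \<inter> A n))))"

text \<open>Convergence of \<open>(x n)\<close> for \<open>n \<in> A\<close>: along the cofinite filter restricted to A.\<close>
definition FinBW :: "'a set set \<Rightarrow> 'c topology \<Rightarrow> bool" where
  "FinBW I T \<longleftrightarrow> Hausdorff_space T \<and>
     (\<forall>x :: 'a \<Rightarrow> 'c. (\<forall>n\<in>\<Union>I. x n \<in> topspace T) \<longrightarrow>
        (\<exists>A. A \<subseteq> \<Union>I \<and> A \<notin> I \<and> (\<exists>L. limitin T x L (inf cofinite (principal A)))))"

definition Fin2 :: "(nat \<times> nat) set set" where
  "Fin2 = {A. finite {n. infinite {m. (n, m) \<in> A}}}"

definition Fin_times_empty :: "(nat \<times> nat) set set" where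
  "Fin_times_empty = {A. \<exists>F. finite F \<and> A \<subseteq> F \<times> UNIV}"

definition hat_ideal :: "'a set set \<Rightarrow> (nat \<times> nat \<Rightarrow> 'a set) \<Rightarrow> (nat \<times> nat) set set" where
  "hat_ideal I G = {A. \<forall>Y. Y \<subseteq> (\<Union>p\<in>A. G p) \<and> (\<forall>p\<in>A. finite (Y \<inter> G p)) \<longrightarrow> Y \<in> I}"

definition ideal_preceq :: "'b set set \<Rightarrow> 'a set set \<Rightarrow> bool" where
  "ideal_preceq J I \<longleftrightarrow> (\<forall>H :: nat \<times> nat \<Rightarrow> 'b set.
     partition_in J (\<Union>J) H \<and> Fin_times_empty \<subseteq> hat_ideal J H \<longrightarrow>
     (\<exists>G :: nat \<times> nat \<Rightarrow> 'a set. partition_in I (\<Union>I) G \<and>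
        hat_ideal J H \<inter> Fin2 \<subseteq> hat_ideal I G))"

end

theory Submission
  imports Defs
begin

text \<open>
  Suppose a sequence \<open>x\<close> on \<open>\<Union>J\<close> converges on no J-positive set. Then every fibre of \<open>x\<close>
  lies in J, and the weak P-property gives a positive S on which \<open>x\<close> is finite-to-one. Since
  every countable infinite subset of a FinBW(I) space has a convergent infinite subset, an
  induction shows that \<open>x(S)\<close> has infinitely many limit points \<open>M i\<close>, attained along pairwise
  disjoint sets \<open>W i\<close>. Put the values of \<open>x\<close> into column 0 of an \<open>\<omega> \<times> \<omega>\<close> array \<open>u\<close> and
  enumerate \<open>W i\<close> along row i; the fibres of column 0 form a partition H of \<open>\<Union>J\<close> with
  \<open>Fin_times_empty \<subseteq> hat_ideal J H\<close>, so \<open>J \<preceq> I\<close> provides a partition G of \<open>\<Union>I\<close>.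
  FinBW(I) applied to the sequence equal to \<open>u p\<close> on \<open>G p\<close> gives \<open>A \<notin> hat_ideal I G\<close>
  along which \<open>u\<close> converges to some L.
  The rows converge to distinct points, so at most one row of A is infinite: \<open>A \<in> Fin2\<close>,
  hence \<open>A \<notin> hat_ideal J H\<close>, which produces a J-positive set on which \<open>x\<close> converges to L.
\<close>

section \<open>Convergence along a subset\<close>

definition converges_on :: "'c topology \<Rightarrow> ('a \<Rightarrow> 'c) \<Rightarrow> 'a set \<Rightarrow> 'c \<Rightarrow> bool" where
  "converges_on T f A L \<longleftrightarrow> limitin T f L (inf cofinite (principal A))"

lemma converges_on_iff:
  "converges_on T f A L \<longleftrightarrow>
     L \<in> topspace T \<and> (\<forall>U. openin T U \<and> L \<in> U \<longrightarrow> finite {n\<in>A. f n \<notin> U})"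
  unfolding converges_on_def limitin_def eventually_inf_principal eventually_cofinite
  by (simp add: conj_commute)

lemma converges_on_cong:
  assumes "\<And>n. n \<in> A \<Longrightarrow> f n = g n"
  shows "converges_on T f A L \<longleftrightarrow> converges_on T g A L"
proof -
  have "{n\<in>A. f n \<notin> U} = {n\<in>A. g n \<notin> U}" for U using assms by auto
  then show ?thesis by (simp add: converges_on_iff)
qed

lemma converges_on_const:
  assumes "L \<in> topspace T" "\<And>n. n \<in> A \<Longrightarrow> f n = L"
  shows "converges_on T f A L"
proof -
  have "{n\<in>A. f n \<notin> U} = {}" if "L \<in> U" for U using assms(2) that by auto
  then show ?thesis using assms(1) unfolding converges_on_iff by (metis finite.emptyI)
qed

lemma converges_on_subset:
  assumes "converges_on T f A L" "B \<subseteq> A"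
  shows "converges_on T f B L"
proof -
  have "{n\<in>B. f n \<notin> U} \<subseteq> {n\<in>A. f n \<notin> U}" for U using assms(2) by blast
  then show ?thesis using assms(1) unfolding converges_on_iff by (meson finite_subset)
qed

lemma converges_on_compose_inj:
  assumes "converges_on T g B L" "inj_on h A" "h ` A \<subseteq> B"
  shows "converges_on T (g \<circ> h) A L"
  unfolding converges_on_iff
proof (intro conjI allI impI)
  show "L \<in> topspace T" using assms(1) by (simp add: converges_on_iff)
  fix U assume "openin T U \<and> L \<in> U"
  then have "finite {m\<in>B. g m \<notin> U}" using assms(1) by (simp add: converges_on_iff)
  moreover have "h ` {n\<in>A. (g \<circ> h) n \<notin> U} \<subseteq> {m\<in>B. g m \<notin> U}" using assms(3) by auto
  ultimately have "finite (h ` {n\<in>A. (g \<circ> h) n \<notin> U})" by (rule finite_subset[rotated])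
  moreover have "inj_on h {n\<in>A. (g \<circ> h) n \<notin> U}" using assms(2) by (rule inj_on_subset) auto
  ultimately show "finite {n\<in>A. (g \<circ> h) n \<notin> U}" by (rule finite_imageD)
qed

lemma converges_on_image:
  assumes "converges_on T f A L"
  shows "converges_on T id (f ` A) L"
  unfolding converges_on_iff
proof (intro conjI allI impI)
  show "L \<in> topspace T" using assms by (simp add: converges_on_iff)
  fix U assume "openin T U \<and> L \<in> U"
  then have "finite (f ` {n\<in>A. f n \<notin> U})" using assms by (simp add: converges_on_iff)
  moreover have "{m\<in>f ` A. id m \<notin> U} \<subseteq> f ` {n\<in>A. f n \<notin> U}" by auto
  ultimately show "finite {m\<in>f ` A. id m \<notin> U}" by (rule finite_subset[rotated])
qed

lemma trivial_limit_cofinite_principal: "trivial_limit (inf cofinite (principal A)) \<longleftrightarrow> finite A"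
  by (simp add: trivial_limit_def eventually_inf_principal eventually_cofinite)

lemma converges_on_unique:
  assumes "Hausdorff_space T" "infinite A" "converges_on T f A L1" "converges_on T f A L2"
  shows "L1 = L2"
proof (rule limitin_Hausdorff_unique)
  show "limitin T f L1 (inf cofinite (principal A))" "limitin T f L2 (inf cofinite (principal A))"
    using assms(3,4) by (simp_all add: converges_on_def)
  show "\<not> trivial_limit (inf cofinite (principal A))"
    using assms(2) by (simp add: trivial_limit_cofinite_principal)
qed (rule assms(1))

lemma converges_on_limit_notin_open:
  assumes "converges_on T f A L" "infinite A" "openin T U" "\<And>n. n \<in> A \<Longrightarrow> f n \<notin> U"
  shows "L \<notin> U"
proof
  assume "L \<in> U"
  then have "finite {n\<in>A. f n \<notin> U}" using assms(1,3) by (simp add: converges_on_iff)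
  moreover have "{n\<in>A. f n \<notin> U} = A" using assms(4) by blast
  ultimately show False using assms(2) by simp
qed

lemma converges_on_finite_level_set:
  assumes "Hausdorff_space T" "converges_on T f A L" "c \<in> topspace T" "c \<noteq> L"
  shows "finite {n\<in>A. f n = c}"
proof -
  have "L \<in> topspace T" using assms(2) by (simp add: converges_on_iff)
  then obtain U V where UV: "openin T U" "openin T V" "L \<in> U" "c \<in> V" "disjnt U V"
    using assms(1,3,4) unfolding Hausdorff_space_def by blast
  then have "{n\<in>A. f n = c} \<subseteq> {n\<in>A. f n \<notin> U}" by (auto simp: disjnt_iff)
  moreover have "finite {n\<in>A. f n \<notin> U}" using assms(2) UV by (simp add: converges_on_iff)
  ultimately show ?thesis by (rule finite_subset)
qed

section \<open>Ideals and partitions\<close>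

lemma ideal_downward: "ideal I \<Longrightarrow> A \<in> I \<Longrightarrow> B \<subseteq> A \<Longrightarrow> B \<in> I"
  unfolding ideal_def ideal_on_def by blast

lemma ideal_Un: "ideal I \<Longrightarrow> A \<in> I \<Longrightarrow> B \<in> I \<Longrightarrow> A \<union> B \<in> I"
  unfolding ideal_def ideal_on_def by blast

lemma ideal_finite: "ideal I \<Longrightarrow> F \<subseteq> \<Union>I \<Longrightarrow> finite F \<Longrightarrow> F \<in> I"
  unfolding ideal_def ideal_on_def by blast

lemma ideal_countable: "ideal I \<Longrightarrow> countable (\<Union>I)"
  unfolding ideal_def ideal_on_def by blast

lemma ideal_infinite: "ideal I \<Longrightarrow> infinite (\<Union>I)"
  unfolding ideal_def ideal_on_def by blast

lemma ideal_empty: "ideal I \<Longrightarrow> {} \<in> I"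
  using ideal_finite by blast

lemma ideal_positive_infinite: "ideal I \<Longrightarrow> A \<subseteq> \<Union>I \<Longrightarrow> A \<notin> I \<Longrightarrow> infinite A"
  using ideal_finite by blast

lemma ideal_positive_Un: "ideal I \<Longrightarrow> A \<union> B \<notin> I \<Longrightarrow> A \<notin> I \<or> B \<notin> I"
  using ideal_Un by blast

lemma ideal_positive_Diff:
  assumes "ideal I" "B \<notin> I" "C \<in> I"
  shows "B - C \<notin> I"
proof
  assume "B - C \<in> I"
  then have "(B - C) \<union> C \<in> I" using assms(3) by (rule ideal_Un[OF assms(1)])
  moreover have "B \<subseteq> (B - C) \<union> C" by blast
  ultimately have "B \<in> I" by (rule ideal_downward[OF assms(1)])
  with assms(2) show False by contradiction
qed

lemma ideal_UN_finite:
  assumes "ideal I" "finite F" "\<And>i. i \<in> F \<Longrightarrow> P i \<in> I"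
  shows "(\<Union>i\<in>F. P i) \<in> I"
  using assms(2,3)
proof (induction F rule: finite_induct)
  case empty
  show ?case using ideal_empty[OF assms(1)] by simp
next
  case (insert i F)
  then show ?case using ideal_Un[OF assms(1)] by simp
qed

definition partition_index :: "('i \<Rightarrow> 'a set) \<Rightarrow> 'a \<Rightarrow> 'i" where
  "partition_index P n = (THE i. n \<in> P i)"

lemma partition_index_eq:
  assumes "partition_in I X P" "n \<in> P i"
  shows "partition_index P n = i"
  unfolding partition_index_def
proof (rule the_equality)
  show "n \<in> P i" by (rule assms(2))
  show "j = i" if "n \<in> P j" for j
    using assms that unfolding partition_in_def by blast
qed

lemma partition_in_mem: "partition_in I X P \<Longrightarrow> P i \<in> I"
  unfolding partition_in_def by blast

lemma partition_index_mem:
  assumes "partition_in I X P" "n \<in> X"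
  shows "n \<in> P (partition_index P n)"
proof -
  obtain i where "n \<in> P i" using assms unfolding partition_in_def by blast
  then show ?thesis using partition_index_eq[OF assms(1)] by simp
qed

lemma FinBW_Hausdorff: "FinBW I T \<Longrightarrow> Hausdorff_space T"
  unfolding FinBW_def by blast

lemma FinBW_converges_on:
  assumes "FinBW I T" "\<And>n. n \<in> \<Union>I \<Longrightarrow> x n \<in> topspace T"
  obtains A L where "A \<subseteq> \<Union>I" "A \<notin> I" "converges_on T x A L"
  using assms unfolding FinBW_def converges_on_def by blast

lemma FinBW_infinite_subset_converges:
  assumes "ideal I" "FinBW I T" "W \<subseteq> topspace T" "countable W" "infinite W"
  obtains W' L where "W' \<subseteq> W" "infinite W'" "converges_on T id W' L"
proof -
  define g where "g = from_nat_into W \<circ> to_nat_on (\<Union>I)"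
  have "bij_betw (to_nat_on (\<Union>I)) (\<Union>I) UNIV"
    by (rule to_nat_on_infinite[OF ideal_countable[OF assms(1)] ideal_infinite[OF assms(1)]])
  then have "bij_betw g (\<Union>I) W"
    unfolding g_def by (rule bij_betw_trans[OF _ bij_betw_from_nat_into[OF assms(4,5)]])
  then have g: "inj_on g (\<Union>I)" "g ` \<Union>I = W" by (simp_all add: bij_betw_def)
  then have "\<And>n. n \<in> \<Union>I \<Longrightarrow> g n \<in> topspace T" using assms(3) by blast
  then obtain B L where B: "B \<subseteq> \<Union>I" "B \<notin> I" "converges_on T g B L"
    by (rule FinBW_converges_on[OF assms(2)])
  have "infinite B" by (rule ideal_positive_infinite[OF assms(1) B(1,2)])
  then have "infinite (g ` B)" using finite_imageD[OF _ inj_on_subset[OF g(1) B(1)]] by blast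
  moreover have "g ` B \<subseteq> W" using g(2) B(1) by blast
  ultimately show ?thesis using that[OF _ _ converges_on_image[OF B(3)]] by simp
qed

lemma converges_on_partition_pieces:
  assumes "partition_in I X G" "converges_on T (u \<circ> partition_index G) B L"
  shows "converges_on T u {p. B \<inter> G p \<noteq> {}} L"
proof -
  let ?A = "{p. B \<inter> G p \<noteq> {}}"
  define c where "c p = (SOME n. n \<in> B \<inter> G p)" for p
  have c: "c p \<in> B \<inter> G p" if "p \<in> ?A" for p
  proof -
    from that obtain n where "n \<in> B \<inter> G p" by blast
    then show ?thesis unfolding c_def by (rule someI)
  qed
  have index_c: "partition_index G (c p) = p" if "p \<in> ?A" for p
    using c[OF that] by (intro partition_index_eq[OF assms(1)]) blast
  have "inj_on c ?A" by (rule inj_onI) (metis index_c)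
  moreover have "c ` ?A \<subseteq> B" using c by blast
  ultimately have "converges_on T (u \<circ> partition_index G \<circ> c) ?A L"
    by (rule converges_on_compose_inj[OF assms(2)])
  then show ?thesis by (rule iffD1[OF converges_on_cong, rotated]) (simp add: index_c)
qed

lemma hat_idealD:
  "A \<in> hat_ideal I G \<Longrightarrow> Y \<subseteq> (\<Union>p\<in>A. G p) \<Longrightarrow> (\<And>p. p \<in> A \<Longrightarrow> finite (Y \<inter> G p)) \<Longrightarrow>
    Y \<in> I"
  unfolding hat_ideal_def by blast

text \<open>Apply FinBW(I) to the sequence that is constant equal to u p on the piece G p, then discard
  the finitely many pieces on which u takes the limit value: what remains of the convergent
  positive set meets every piece in a finite set.\<close>
lemma FinBW_hat_ideal_positive:
  assumes "ideal I" "FinBW I T" "partition_in I (\<Union>I) G"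
    and "\<And>p. u p \<in> topspace T" "\<And>c. finite (u -` {c})"
  obtains A L where "A \<notin> hat_ideal I G" "converges_on T u A L"
proof -
  let ?y = "u \<circ> partition_index G"
  have "\<And>n. n \<in> \<Union>I \<Longrightarrow> ?y n \<in> topspace T" using assms(4) by simp
  then obtain B L where B: "B \<subseteq> \<Union>I" "B \<notin> I" "converges_on T ?y B L"
    by (rule FinBW_converges_on[OF assms(2)])
  define B' where "B' = B - (\<Union>p\<in>u -` {L}. G p)"
  have B'_positive: "B' \<notin> I"
    unfolding B'_def
    by (rule ideal_positive_Diff[OF assms(1) B(2) ideal_UN_finite[OF assms(1,5) partition_in_mem[OF assms(3)]]])
  have B'_finite: "finite (B' \<inter> G p)" for p
  proof (cases "u p = L")
    case True
    then have "B' \<inter> G p = {}" unfolding B'_def by auto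
    then show ?thesis by simp
  next
    case False
    have "B' \<inter> G p \<subseteq> {n\<in>B. ?y n = u p}"
      unfolding B'_def using partition_index_eq[OF assms(3), of _ p] by auto
    moreover have "finite {n\<in>B. ?y n = u p}"
      using converges_on_finite_level_set[OF FinBW_Hausdorff[OF assms(2)] B(3) assms(4) False] .
    ultimately show ?thesis by (rule finite_subset)
  qed
  let ?A = "{p. B' \<inter> G p \<noteq> {}}"
  have B'_cover: "B' \<subseteq> (\<Union>p\<in>?A. G p)"
  proof
    fix n assume n: "n \<in> B'"
    then have "n \<in> \<Union>I" using B(1) unfolding B'_def by (meson DiffD1 subsetD)
    then have "n \<in> G (partition_index G n)" by (rule partition_index_mem[OF assms(3)])
    with n show "n \<in> (\<Union>p\<in>?A. G p)" by (intro UN_I[of "partition_index G n"]) auto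
  qed
  have "?A \<notin> hat_ideal I G"
  proof
    assume "?A \<in> hat_ideal I G"
    then have "B' \<in> I" using B'_cover B'_finite by (rule hat_idealD)
    with B'_positive show False by contradiction
  qed
  moreover have "converges_on T u ?A L"
    by (rule converges_on_partition_pieces[OF assms(3)], rule converges_on_subset[OF B(3)])
      (auto simp: B'_def)
  ultimately show ?thesis by (rule that)
qed

lemma converges_on_in_Fin2:
  assumes "Hausdorff_space T" "inj M" "\<And>i. converges_on T (\<lambda>j. u (i, j)) UNIV (M i)"
    and "converges_on T u A L"
  shows "A \<in> Fin2"
proof -
  have "{i. infinite {j. (i, j) \<in> A}} \<subseteq> M -` {L}"
  proof
    fix i assume "i \<in> {i. infinite {j. (i, j) \<in> A}}"
    then have row_infinite: "infinite {j. (i, j) \<in> A}" by simp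
    have "converges_on T (u \<circ> Pair i) {j. (i, j) \<in> A} L"
      by (rule converges_on_compose_inj[OF assms(4)]) (auto simp: inj_on_def)
    moreover have "converges_on T (u \<circ> Pair i) {j. (i, j) \<in> A} (M i)"
      using converges_on_subset[OF assms(3)] by (simp add: comp_def)
    ultimately have "L = M i" by (rule converges_on_unique[OF assms(1) row_infinite])
    then show "i \<in> M -` {L}" by simp
  qed
  moreover have "finite (M -` {L})" using assms(2) by (simp add: finite_vimageI)
  ultimately show ?thesis unfolding Fin2_def mem_Collect_eq by (rule finite_subset)
qed

lemma hat_ideal_positive_converges_on:
  assumes "A \<notin> hat_ideal J H" "converges_on T u A L" "\<And>p n. n \<in> H p \<Longrightarrow> x n = u p"
  obtains Z where "Z \<subseteq> (\<Union>p\<in>A. H p)" "Z \<notin> J" "converges_on T x Z L"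
proof -
  obtain Z where Z: "Z \<subseteq> (\<Union>p\<in>A. H p)" "\<forall>p\<in>A. finite (Z \<inter> H p)" "Z \<notin> J"
    using assms(1) unfolding hat_ideal_def by auto
  have "converges_on T x Z L"
    unfolding converges_on_iff
  proof (intro conjI allI impI)
    show "L \<in> topspace T" using assms(2) by (simp add: converges_on_iff)
    fix U assume "openin T U \<and> L \<in> U"
    then have "finite {p\<in>A. u p \<notin> U}" using assms(2) by (simp add: converges_on_iff)
    then have "finite (\<Union>p\<in>{p\<in>A. u p \<notin> U}. Z \<inter> H p)" using Z(2) by (intro finite_UN_I) auto
    moreover have "{n\<in>Z. x n \<notin> U} \<subseteq> (\<Union>p\<in>{p\<in>A. u p \<notin> U}. Z \<inter> H p)"
    proof
      fix n assume n: "n \<in> {n\<in>Z. x n \<notin> U}"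
      then obtain p where p: "p \<in> A" "n \<in> H p" using Z(1) by blast
      then have "u p \<notin> U" using n assms(3) by simp
      with n p show "n \<in> (\<Union>p\<in>{p\<in>A. u p \<notin> U}. Z \<inter> H p)" by blast
    qed
    ultimately show "finite {n\<in>Z. x n \<notin> U}" by (rule finite_subset[rotated])
  qed
  with Z(1,3) show ?thesis by (rule that)
qed

lemma Fin_times_empty_subset_hat_ideal:
  assumes "ideal J" "\<And>i. (\<Union>j. H (i, j)) \<in> J"
  shows "Fin_times_empty \<subseteq> hat_ideal J H"
proof
  fix A assume "A \<in> Fin_times_empty"
  then obtain F where F: "finite F" "A \<subseteq> F \<times> UNIV" unfolding Fin_times_empty_def by blast
  have "(\<Union>i\<in>F. \<Union>j. H (i, j)) \<in> J" using ideal_UN_finite[OF assms(1) F(1)] assms(2) .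
  moreover have "(\<Union>p\<in>A. H p) \<subseteq> (\<Union>i\<in>F. \<Union>j. H (i, j))"
  proof (rule UN_least)
    fix p assume "p \<in> A"
    then show "H p \<subseteq> (\<Union>i\<in>F. \<Union>j. H (i, j))" using F(2) by (cases p) auto
  qed
  ultimately show "A \<in> hat_ideal J H"
    unfolding hat_ideal_def by (blast intro: ideal_downward[OF assms(1)])
qed

section \<open>Infinitely many limit points\<close>

lemma weak_P_ideal_finite_fibres:
  assumes "ideal J" "weak_P_ideal J" "\<And>c. {d\<in>\<Union>J. x d = c} \<in> J"
  obtains S where "S \<subseteq> \<Union>J" "S \<notin> J" "\<And>c. finite {d\<in>S. x d = c}"
proof -
  let ?V = "x ` \<Union>J"
  have countable_V: "countable ?V" using ideal_countable[OF assms(1)] by simp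
  define P where "P k = {d\<in>\<Union>J. to_nat_on ?V (x d) = k}" for k
  have "partition_in J (\<Union>J) P"
    unfolding partition_in_def
  proof (intro conjI allI impI)
    show "P i \<inter> P j = {}" if "i \<noteq> j" for i j using that unfolding P_def by auto
    show "(\<Union>k. P k) = \<Union>J" unfolding P_def by auto
    fix k
    have "P k \<subseteq> {d\<in>\<Union>J. x d = from_nat_into ?V k}"
    proof
      fix d assume d: "d \<in> P k"
      then have "x d \<in> ?V" "to_nat_on ?V (x d) = k" unfolding P_def by auto
      then have "from_nat_into ?V k = x d" using from_nat_into_to_nat_on[OF countable_V] by metis
      with d show "d \<in> {d\<in>\<Union>J. x d = from_nat_into ?V k}" unfolding P_def by simp
    qed
    then show "P k \<in> J" by (rule ideal_downward[OF assms(1) assms(3)])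
  qed
  then obtain S where S: "S \<subseteq> \<Union>J" "S \<notin> J" "\<forall>k. finite (S \<inter> P k)"
    using assms(2) unfolding weak_P_ideal_def by blast
  have "{d\<in>S. x d = c} \<subseteq> S \<inter> P (to_nat_on ?V c)" for c using S(1) unfolding P_def by auto
  then have "finite {d\<in>S. x d = c}" for c using S(3) by (meson finite_subset)
  with S(1,2) show ?thesis by (rule that)
qed

lemma finite_fibres_infinite_image:
  assumes "\<And>c. finite {d\<in>S. x d = c}" "S' \<subseteq> S" "infinite S'"
  shows "infinite (x ` S')"
proof
  assume "finite (x ` S')"
  then have "finite (x -` (x ` S') \<inter> S)"
    by (rule finite_finite_vimage_IntI) (use assms(1) in \<open>simp add: vimage_def Int_def conj_commute\<close>)
  moreover have "S' \<subseteq> x -` (x ` S') \<inter> S" using assms(2) by blast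
  ultimately show False using assms(3) by (meson finite_subset)
qed

context
  fixes J :: "'b set set" and T :: "'c topology" and S :: "'b set" and x :: "'b \<Rightarrow> 'c"
  assumes ideal_J: "ideal J" and Hausdorff_T: "Hausdorff_space T" and S_subset: "S \<subseteq> \<Union>J"
    and finite_fibres: "\<And>c. finite {d\<in>S. x d = c}"
    and accumulation: "\<And>W. W \<subseteq> x ` S \<Longrightarrow> infinite W \<Longrightarrow>
      \<exists>W'\<subseteq>W. infinite W' \<and> (\<exists>L. converges_on T id W' L)"
    and no_limit: "\<And>Z L. Z \<subseteq> S \<Longrightarrow> Z \<notin> J \<Longrightarrow> \<not> converges_on T x Z L"
begin

lemma limit_point_in_image:
  assumes "S' \<subseteq> S" "infinite S'"
  obtains W L where "W \<subseteq> x ` S'" "infinite W" "converges_on T id W L"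
proof -
  have "infinite (x ` S')" by (rule finite_fibres_infinite_image[OF finite_fibres assms])
  then show ?thesis using accumulation[of "x ` S'"] assms(1) that by (meson image_mono subset_trans)
qed

lemma limit_point_other_than:
  assumes "Z \<subseteq> S" "Z \<notin> J" "M \<in> topspace T"
  obtains W L where "W \<subseteq> x ` Z" "infinite W" "converges_on T id W L" "L \<noteq> M"
proof -
  obtain U where U: "openin T U" "M \<in> U" "infinite {d\<in>Z. x d \<notin> U}"
    using no_limit[OF assms(1,2), of M] assms(3) unfolding converges_on_iff by blast
  moreover have "{d\<in>Z. x d \<notin> U} \<subseteq> S" using assms(1) by blast
  ultimately obtain W L where W: "W \<subseteq> x ` {d\<in>Z. x d \<notin> U}" "infinite W" "converges_on T id W L"
    using limit_point_in_image by blast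
  have "L \<notin> U" by (rule converges_on_limit_notin_open[OF W(3,2) U(1)]) (use W(1) in auto)
  with W U(2) show ?thesis using that by blast
qed

text \<open>Separate M from the old limit points: a positive set splits into the points mapped near M
  and the rest, and one of the two parts is positive.\<close>
lemma limit_point_avoiding_insert:
  assumes IH: "\<And>S'. S' \<subseteq> S \<Longrightarrow> S' \<notin> J \<Longrightarrow>
      \<exists>W L. W \<subseteq> x ` S' \<and> infinite W \<and> converges_on T id W L \<and> L \<notin> F"
    and "finite F" "M \<notin> F" "S' \<subseteq> S" "S' \<notin> J"
  shows "\<exists>W L. W \<subseteq> x ` S' \<and> infinite W \<and> converges_on T id W L \<and> L \<notin> insert M F"
proof (cases "M \<in> topspace T")
  case False
  obtain W L where W: "W \<subseteq> x ` S'" "infinite W" "converges_on T id W L" "L \<notin> F"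
    using IH assms(4,5) by blast
  have "L \<noteq> M" using W(3) False by (auto simp: converges_on_iff)
  with W show ?thesis by blast
next
  case True
  obtain U V where UV: "openin T U" "openin T V" "M \<in> U" "F \<inter> topspace T \<subseteq> V" "disjnt U V"
    using Hausdorff_space_compact_separation[OF Hausdorff_T, of "{M}" "F \<inter> topspace T"] True assms(2,3)
    by (auto simp: finite_imp_compactin disjnt_def)
  define S1 where "S1 = {d\<in>S'. x d \<notin> U}"
  define S2 where "S2 = {d\<in>S'. x d \<in> U}"
  have "S1 \<subseteq> S" "S2 \<subseteq> S" using assms(4) unfolding S1_def S2_def by auto
  have "S' = S1 \<union> S2" unfolding S1_def S2_def by blast
  then have "S1 \<notin> J \<or> S2 \<notin> J" using assms(5) ideal_positive_Un[OF ideal_J] by simp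
  then show ?thesis
  proof
    assume "S1 \<notin> J"
    then obtain W L where W: "W \<subseteq> x ` S1" "infinite W" "converges_on T id W L" "L \<notin> F"
      using IH \<open>S1 \<subseteq> S\<close> by blast
    have "L \<notin> U" by (rule converges_on_limit_notin_open[OF W(3,2) UV(1)]) (use W(1) S1_def in auto)
    with W UV(3) show ?thesis unfolding S1_def by blast
  next
    assume "S2 \<notin> J"
    then obtain W L where W: "W \<subseteq> x ` S2" "infinite W" "converges_on T id W L" "L \<noteq> M"
      using limit_point_other_than \<open>S2 \<subseteq> S\<close> True by blast
    have "L \<notin> V"
      by (rule converges_on_limit_notin_open[OF W(3,2) UV(2)])
        (use W(1) UV(5) in \<open>auto simp: S2_def disjnt_def\<close>)
    then have "L \<notin> F" using W(3) UV(4) by (auto simp: converges_on_iff)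
    with W show ?thesis unfolding S2_def by blast
  qed
qed

lemma limit_point_avoiding_finite:
  assumes "finite F" "S' \<subseteq> S" "S' \<notin> J"
  shows "\<exists>W L. W \<subseteq> x ` S' \<and> infinite W \<and> converges_on T id W L \<and> L \<notin> F"
  using assms
proof (induction F arbitrary: S' rule: finite_induct)
  case empty
  have "infinite S'"
    by (rule ideal_positive_infinite[OF ideal_J subset_trans[OF empty.prems(1) S_subset] empty.prems(2)])
  then obtain W L where "W \<subseteq> x ` S'" "infinite W" "converges_on T id W L"
    by (rule limit_point_in_image[OF empty.prems(1)])
  then show ?case by blast
next
  case (insert M F)
  show ?case by (rule limit_point_avoiding_insert[OF insert.IH insert.hyps insert.prems])
qed

lemma infinitely_many_limit_points:
  assumes "S \<notin> J"
  shows "infinite {L. \<exists>W\<subseteq>x ` S. infinite W \<and> converges_on T id W L}"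
proof
  assume "finite {L. \<exists>W\<subseteq>x ` S. infinite W \<and> converges_on T id W L}"
  from limit_point_avoiding_finite[OF this order_refl assms] show False by blast
qed

end

lemma infinite_disjointed:
  assumes "\<And>i. infinite (W i)" "\<And>i l. i \<noteq> l \<Longrightarrow> finite (W i \<inter> W l)"
  shows "infinite (disjointed W i)"
proof
  assume "finite (disjointed W i)"
  moreover have "finite (\<Union>l\<in>{0..<i}. W i \<inter> W l)" using assms(2) by (intro finite_UN_I) auto
  moreover have "W i \<subseteq> disjointed W i \<union> (\<Union>l\<in>{0..<i}. W i \<inter> W l)" unfolding disjointed_def by blast
  ultimately show False using assms(1) by (meson finite_UnI finite_subset)
qed

lemma disjoint_convergent_family:
  assumes "Hausdorff_space T" "infinite {L. \<exists>W\<subseteq>V. infinite W \<and> converges_on T id W L}"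
  obtains M :: "nat \<Rightarrow> 'c" and W :: "nat \<Rightarrow> 'c set"
  where "inj M" "disjoint_family W" "\<And>i. W i \<subseteq> V" "\<And>i. infinite (W i)"
    "\<And>i. converges_on T id (W i) (M i)"
proof -
  obtain M :: "nat \<Rightarrow> 'c" where M: "inj M" "range M \<subseteq> {L. \<exists>W\<subseteq>V. infinite W \<and> converges_on T id W L}"
    using infinite_countable_subset[OF assms(2)] by blast
  then have "\<forall>i. \<exists>W. W \<subseteq> V \<and> infinite W \<and> converges_on T id W (M i)" by blast
  then obtain W0 where "\<forall>i. W0 i \<subseteq> V \<and> infinite (W0 i) \<and> converges_on T id (W0 i) (M i)"
    by (rule exE[OF choice])
  then have W0: "\<And>i. W0 i \<subseteq> V" "\<And>i. infinite (W0 i)" "\<And>i. converges_on T id (W0 i) (M i)"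
    by simp_all
  have "finite (W0 i \<inter> W0 l)" if "i \<noteq> l" for i l
  proof (rule ccontr)
    assume "infinite (W0 i \<inter> W0 l)"
    then have "M i = M l"
      using converges_on_unique[OF assms(1)] converges_on_subset W0(3) by (metis inf_le1 inf_le2)
    with M(1) that show False by (simp add: inj_eq)
  qed
  then have "\<And>i. infinite (disjointed W0 i)" using infinite_disjointed W0(2) by blast
  moreover have "\<And>i. converges_on T id (disjointed W0 i) (M i)"
    using converges_on_subset[OF W0(3) disjointed_subset] .
  moreover have "\<And>i. disjointed W0 i \<subseteq> V" using W0(1) disjointed_subset by (meson subset_trans)
  ultimately show ?thesis using that[OF M(1) disjoint_family_disjointed] by blast
qed

section \<open>The array construction\<close>

lemma ideal_preceq_converges_on:
  assumes "ideal I" "FinBW I T" "ideal_preceq J I"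
    and "partition_in J (\<Union>J) H" "Fin_times_empty \<subseteq> hat_ideal J H"
    and "\<And>p. u p \<in> topspace T" "\<And>c. finite (u -` {c})"
    and "inj M" "\<And>i. converges_on T (\<lambda>j. u (i, j)) UNIV (M i)"
    and "\<And>p n. n \<in> H p \<Longrightarrow> x n = u p"
  obtains Z L where "Z \<subseteq> \<Union>J" "Z \<notin> J" "converges_on T x Z L"
proof -
  obtain G where G: "partition_in I (\<Union>I) G" "hat_ideal J H \<inter> Fin2 \<subseteq> hat_ideal I G"
    using assms(3-5) unfolding ideal_preceq_def by blast
  obtain A L where A: "A \<notin> hat_ideal I G" "converges_on T u A L"
    by (rule FinBW_hat_ideal_positive[OF assms(1,2) G(1) assms(6,7)])
  have "A \<in> Fin2" by (rule converges_on_in_Fin2[OF FinBW_Hausdorff[OF assms(2)] assms(8,9) A(2)])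
  with A(1) G(2) have "A \<notin> hat_ideal J H" by blast
  then obtain Z where Z: "Z \<subseteq> (\<Union>p\<in>A. H p)" "Z \<notin> J" "converges_on T x Z L"
    by (rule hat_ideal_positive_converges_on[OF _ A(2) assms(10)])
  have "(\<Union>p\<in>A. H p) \<subseteq> \<Union>J" using assms(4) unfolding partition_in_def by blast
  with Z(1) have "Z \<subseteq> \<Union>J" by (rule subset_trans)
  then show ?thesis by (rule that[OF _ Z(2,3)])
qed

text \<open>Column 0 enumerates the values v i of a sequence, so that its fibres can serve as the pieces
  of a partition; row i continues with an enumeration \<open>\<sigma> i\<close> of a set converging to a point
  of its own (the value \<open>\<sigma> i 0\<close> is never used).\<close>
definition row_array :: "(nat \<Rightarrow> 'c) \<Rightarrow> (nat \<Rightarrow> nat \<Rightarrow> 'c) \<Rightarrow> nat \<times> nat \<Rightarrow> 'c" where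
  "row_array v \<sigma> p = (if snd p = 0 then v (fst p) else \<sigma> (fst p) (snd p))"

lemma row_array_vimage_finite:
  assumes "inj v" "\<And>i. inj (\<sigma> i)" "disjoint_family (\<lambda>i. range (\<sigma> i))"
  shows "finite (row_array v \<sigma> -` {c})"
proof -
  have "inj_on (row_array v \<sigma>) {p. snd p = 0}"
  proof (rule inj_onI)
    fix p q assume "p \<in> {p. snd p = 0}" "q \<in> {p. snd p = 0}" "row_array v \<sigma> p = row_array v \<sigma> q"
    then have "snd p = 0" "snd q = 0" "v (fst p) = v (fst q)" by (simp_all add: row_array_def)
    then show "p = q" using injD[OF assms(1)] by (simp add: prod_eq_iff)
  qed
  moreover have "inj_on (row_array v \<sigma>) {p. snd p \<noteq> 0}"
  proof (rule inj_onI)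
    fix p q assume "p \<in> {p. snd p \<noteq> 0}" "q \<in> {p. snd p \<noteq> 0}" "row_array v \<sigma> p = row_array v \<sigma> q"
    then have eq: "\<sigma> (fst p) (snd p) = \<sigma> (fst q) (snd q)" by (simp add: row_array_def)
    have "fst p = fst q"
    proof (rule ccontr)
      assume "fst p \<noteq> fst q"
      then have "range (\<sigma> (fst p)) \<inter> range (\<sigma> (fst q)) = {}"
        using assms(3) by (simp add: disjoint_family_on_def)
      moreover have "\<sigma> (fst p) (snd p) \<in> range (\<sigma> (fst q))" by (simp add: eq)
      ultimately show False by auto
    qed
    with eq have "snd p = snd q" using assms(2) by (simp add: inj_eq)
    with \<open>fst p = fst q\<close> show "p = q" by (simp add: prod_eq_iff)
  qed
  ultimately have "finite (row_array v \<sigma> -` {c} \<inter> {p. snd p = 0})"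
    "finite (row_array v \<sigma> -` {c} \<inter> {p. snd p \<noteq> 0})"
    by (simp_all add: finite_vimage_IntI)
  then have "finite (row_array v \<sigma> -` {c} \<inter> {p. snd p = 0} \<union> row_array v \<sigma> -` {c} \<inter> {p. snd p \<noteq> 0})"
    by (rule finite_UnI)
  then show ?thesis by (rule finite_subset[rotated]) blast
qed

lemma row_array_row_converges_on:
  assumes "converges_on T (\<sigma> i) UNIV L"
  shows "converges_on T (\<lambda>j. row_array v \<sigma> (i, j)) UNIV L"
  unfolding converges_on_iff
proof (intro conjI allI impI)
  show "L \<in> topspace T" using assms by (simp add: converges_on_iff)
  fix U assume "openin T U \<and> L \<in> U"
  then have "finite {j\<in>UNIV. \<sigma> i j \<notin> U}" using assms by (simp add: converges_on_iff)
  moreover have "{j\<in>UNIV. row_array v \<sigma> (i, j) \<notin> U} \<subseteq> insert 0 {j\<in>UNIV. \<sigma> i j \<notin> U}"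
    by (auto simp: row_array_def)
  ultimately show "finite {j\<in>UNIV. row_array v \<sigma> (i, j) \<notin> U}" by (meson finite_insert finite_subset)
qed

lemma fibre_column_partition:
  assumes "ideal J" "bij_betw v UNIV (x ` \<Union>J)" "\<And>c. {d\<in>\<Union>J. x d = c} \<in> J"
  defines "H \<equiv> \<lambda>p. if snd p = 0 then {d\<in>\<Union>J. x d = v (fst p)} else {}"
  shows "partition_in J (\<Union>J) H" and "Fin_times_empty \<subseteq> hat_ideal J H"
proof -
  have v: "inj v" "range v = x ` \<Union>J" using assms(2) by (simp_all add: bij_betw_def)
  have H_subset_fibre: "H p \<subseteq> {d\<in>\<Union>J. x d = v (fst p)}" for p unfolding H_def by auto
  show "partition_in J (\<Union>J) H"
    unfolding partition_in_def
  proof (intro conjI allI impI)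
    fix p q :: "nat \<times> nat" assume "p \<noteq> q"
    show "H p \<inter> H q = {}"
    proof (rule equals0I)
      fix d assume d: "d \<in> H p \<inter> H q"
      have "snd p = 0 \<and> x d = v (fst p)" using IntD1[OF d] unfolding H_def by (simp split: if_splits)
      moreover have "snd q = 0 \<and> x d = v (fst q)" using IntD2[OF d] unfolding H_def by (simp split: if_splits)
      ultimately have "p = q" using v(1) by (metis injD prod_eq_iff)
      with \<open>p \<noteq> q\<close> show False by contradiction
    qed
  next
    show "(\<Union>p. H p) = \<Union>J"
    proof
      show "(\<Union>p. H p) \<subseteq> \<Union>J" using H_subset_fibre by blast
      show "\<Union>J \<subseteq> (\<Union>p. H p)"
      proof
        fix d assume d: "d \<in> \<Union>J"
        then have "x d \<in> range v" unfolding v(2) by (rule imageI)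
        then obtain i where "x d = v i" by (rule rangeE)
        with d have "d \<in> H (i, 0)" unfolding H_def by simp
        then show "d \<in> (\<Union>p. H p)" by (rule UN_I[OF UNIV_I])
      qed
    qed
  next
    show "H p \<in> J" for p by (rule ideal_downward[OF assms(1) assms(3) H_subset_fibre])
  qed
  show "Fin_times_empty \<subseteq> hat_ideal J H"
  proof (rule Fin_times_empty_subset_hat_ideal[OF assms(1)])
    fix i
    have "(\<Union>j. H (i, j)) \<subseteq> {d\<in>\<Union>J. x d = v i}" unfolding H_def by auto
    then show "(\<Union>j. H (i, j)) \<in> J" by (rule ideal_downward[OF assms(1) assms(3)])
  qed
qed

lemma disjoint_convergent_family_converges_on:
  fixes M :: "nat \<Rightarrow> 'c" and W :: "nat \<Rightarrow> 'c set"
  assumes "ideal I" "ideal J" "FinBW I T" "ideal_preceq J I"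
    and "\<And>c. {d\<in>\<Union>J. x d = c} \<in> J" "x ` \<Union>J \<subseteq> topspace T"
    and "inj M" "disjoint_family W" "\<And>i. W i \<subseteq> x ` \<Union>J" "\<And>i. infinite (W i)"
    and "\<And>i. converges_on T id (W i) (M i)"
  obtains Z L where "Z \<subseteq> \<Union>J" "Z \<notin> J" "converges_on T x Z L"
proof -
  let ?V = "x ` \<Union>J"
  have countable_V: "countable ?V" using ideal_countable[OF assms(2)] by simp
  have "infinite ?V" using assms(9,10) by (meson finite_subset)
  then have v: "bij_betw (from_nat_into ?V) UNIV ?V" by (rule bij_betw_from_nat_into[OF countable_V])
  define \<sigma> where "\<sigma> i = from_nat_into (W i)" for i
  have \<sigma>: "bij_betw (\<sigma> i) UNIV (W i)" for i
    unfolding \<sigma>_def by (rule bij_betw_from_nat_into[OF countable_subset[OF assms(9) countable_V] assms(10)])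
  define u where "u = row_array (from_nat_into ?V) \<sigma>"
  define H :: "nat \<times> nat \<Rightarrow> 'b set"
    where "H = (\<lambda>p. if snd p = 0 then {d\<in>\<Union>J. x d = from_nat_into ?V (fst p)} else {})"
  have H: "partition_in J (\<Union>J) H" "Fin_times_empty \<subseteq> hat_ideal J H"
    unfolding H_def by (rule fibre_column_partition[OF assms(2) v assms(5)])+
  have u_topspace: "u p \<in> topspace T" for p
  proof -
    have "\<sigma> i j \<in> ?V" for i j using bij_betw_apply[OF \<sigma>] assms(9) by blast
    then have "u p \<in> ?V" using bij_betw_apply[OF v] unfolding u_def row_array_def by auto
    then show ?thesis using assms(6) by blast
  qed
  have u_finite_fibres: "finite (u -` {c})" for c
    unfolding u_def
  proof (rule row_array_vimage_finite)
    show "inj (from_nat_into ?V)" using v by (simp add: bij_betw_def)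
    show "inj (\<sigma> i)" for i using \<sigma> by (simp add: bij_betw_def)
    show "disjoint_family (\<lambda>i. range (\<sigma> i))" using assms(8) \<sigma> by (simp add: bij_betw_def)
  qed
  have u_rows: "converges_on T (\<lambda>j. u (i, j)) UNIV (M i)" for i
  proof -
    have "converges_on T (id \<circ> \<sigma> i) UNIV (M i)"
      by (rule converges_on_compose_inj[OF assms(11)]) (use \<sigma> in \<open>simp_all add: bij_betw_def\<close>)
    then have "converges_on T (\<sigma> i) UNIV (M i)" by simp
    then show ?thesis unfolding u_def by (rule row_array_row_converges_on)
  qed
  have x_on_H: "\<And>p n. n \<in> H p \<Longrightarrow> x n = u p"
    unfolding H_def u_def row_array_def by (auto split: if_splits)
  obtain Z L where "Z \<subseteq> \<Union>J" "Z \<notin> J" "converges_on T x Z L"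
    by (rule ideal_preceq_converges_on[OF assms(1,3,4) H u_topspace u_finite_fibres assms(7) u_rows x_on_H])
  then show ?thesis by (rule that)
qed

lemma fibre_in_ideal_of_no_limit:
  assumes "ideal J" "x ` \<Union>J \<subseteq> topspace T"
    and "\<And>Z L. Z \<subseteq> \<Union>J \<Longrightarrow> Z \<notin> J \<Longrightarrow> \<not> converges_on T x Z L"
  shows "{d\<in>\<Union>J. x d = c} \<in> J"
proof (rule ccontr)
  assume positive: "{d\<in>\<Union>J. x d = c} \<notin> J"
  then have "{d\<in>\<Union>J. x d = c} \<noteq> {}" by (metis ideal_empty[OF assms(1)])
  then obtain d where "d \<in> \<Union>J" "x d = c" by blast
  then have "c \<in> topspace T" using assms(2) by auto
  then have "converges_on T x {d\<in>\<Union>J. x d = c} c" by (rule converges_on_const) simp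
  with assms(3)[OF _ positive] show False by blast
qed

lemma weak_P_preceq_converges_on:
  fixes x :: "'b \<Rightarrow> 'c"
  assumes "ideal I" "ideal J" "weak_P_ideal J" "ideal_preceq J I" "FinBW I T"
    and "x ` \<Union>J \<subseteq> topspace T"
  shows "\<exists>Z\<subseteq>\<Union>J. Z \<notin> J \<and> (\<exists>L. converges_on T x Z L)"
proof (rule ccontr)
  assume "\<not> ?thesis"
  then have no_limit: "\<And>Z L. Z \<subseteq> \<Union>J \<Longrightarrow> Z \<notin> J \<Longrightarrow> \<not> converges_on T x Z L" by blast
  have fibres: "{d\<in>\<Union>J. x d = c} \<in> J" for c
    by (rule fibre_in_ideal_of_no_limit[OF assms(2,6) no_limit])
  obtain S where S: "S \<subseteq> \<Union>J" "S \<notin> J" "\<And>c. finite {d\<in>S. x d = c}"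
    using weak_P_ideal_finite_fibres[OF assms(2,3) fibres] by blast
  have limit_points: "infinite {L. \<exists>W\<subseteq>x ` S. infinite W \<and> converges_on T id W L}"
  proof (rule infinitely_many_limit_points[OF assms(2) FinBW_Hausdorff[OF assms(5)] S(1,3) _ _ S(2)])
    fix W assume W: "W \<subseteq> x ` S" "infinite W"
    have "W \<subseteq> topspace T" using W(1) image_mono[OF S(1)] assms(6) by (meson subset_trans)
    moreover have "countable W"
      using W(1) S(1) ideal_countable[OF assms(2)] by (meson countable_image countable_subset)
    ultimately obtain W' L where "W' \<subseteq> W" "infinite W'" "converges_on T id W' L"
      by (rule FinBW_infinite_subset_converges[OF assms(1,5) _ _ W(2)])
    then show "\<exists>W'\<subseteq>W. infinite W' \<and> (\<exists>L. converges_on T id W' L)" by blast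
  next
    show "\<not> converges_on T x Z L" if "Z \<subseteq> S" "Z \<notin> J" for Z L
      using no_limit that S(1) by blast
  qed
  obtain M :: "nat \<Rightarrow> 'c" and W :: "nat \<Rightarrow> 'c set"
    where MW: "inj M" "disjoint_family W" "\<And>i. W i \<subseteq> x ` S" "\<And>i. infinite (W i)"
    "\<And>i. converges_on T id (W i) (M i)"
    using disjoint_convergent_family[OF FinBW_Hausdorff[OF assms(5)] limit_points] by blast
  have W_subset: "W i \<subseteq> x ` \<Union>J" for i using MW(3)[of i] image_mono[OF S(1)] by (rule subset_trans)
  obtain Z L where "Z \<subseteq> \<Union>J" "Z \<notin> J" "converges_on T x Z L"
    by (rule disjoint_convergent_family_converges_on[OF assms(1,2,5,4) fibres assms(6) MW(1,2) W_subset MW(4,5)])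
  with no_limit show False by blast
qed

theorem proposition10p1:
  fixes I :: "'a set set" and J :: "'b set set"
  assumes "ideal I" and "ideal J"
    and "weak_P_ideal J" and "ideal_preceq J I"
  shows "\<forall>T :: 'c topology. FinBW I T \<longrightarrow> FinBW J T"
proof (intro allI impI)
  fix T :: "'c topology" assume FinBW_I: "FinBW I T"
  show "FinBW J T"
    unfolding FinBW_def
  proof (intro conjI allI impI)
    show "Hausdorff_space T" by (rule FinBW_Hausdorff[OF FinBW_I])
    fix x :: "'b \<Rightarrow> 'c" assume "\<forall>n\<in>\<Union>J. x n \<in> topspace T"
    then have "x ` \<Union>J \<subseteq> topspace T" by blast
    from weak_P_preceq_converges_on[OF assms FinBW_I this]
    show "\<exists>A. A \<subseteq> \<Union>J \<and> A \<notin> J \<and> (\<exists>L. limitin T x L (inf cofinite (principal A)))"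
      unfolding converges_on_def by blast
  qed
qed

end
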